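(* In every polyhedral model $\mathcal{P}=(|K|,V)$, the relation $\equiv_\eta$ on $|K|$ is a weak simplicial bisimulation.
   Context: Fix a set PL of proposition letters. A simplex $\sigma\subseteq\mathbb{R}^m$ is the convex hull of $d+1$ affinely independent points; its faces are the simplices spanned by nonempty subsets of its vertices; its relative interior (cell) is $\tilde\sigma=\{\sum_i\lambda_iv_i:\lambda_i\in(0,1],\sum_i\lambda_i=1\}$. A simplicial complex $K$ is a finite set of simplices in $\mathbb{R}^m$ closed under faces, any two of which intersect in a common face or in $\emptyset$. The polyhedron $|K|$ is the union of its simplices with the subspace topology; the cells partition $|K|$. A polyhedral model is $\mathcal{P}=(|K|,V)$ with $V:\mathrm{PL}\to\mathcal{P}(|K|)$, each $V(p)$ a union of cells. A topological path from $x$ is a continuous $\pi:[0,1]\to|K|$ with $\pi(0)=x$. SLCS$_\eta$ formulas: $\Phi::=p\mid\neg\Phi\mid\Phi_1\wedge\Phi_2\mid\eta(\Phi_1,\Phi_2)$; $x\models p$ iff $x\in V(p)$; negation, conjunction standard; $x\models\eta(\Phi_1,\Phi_2)$ iff some topological path $\pi$ from $x$ has $\pi(1)\models\Phi_2$ and $\pi(r)\models\Phi_1$ for all $r\in[0,1)$. $x_1\equiv_\eta x_2$ means $x_1,x_2$ satisfy the same SLCS$_\eta$ formulas. A weak simplicial bisimulation is a symmetric relation $B\subseteq|K|\times|K|$ such that whenever $B(x_1,x_2)$: (1) for all $p$, $x_1\in V(p)$ iff $x_2\in V(p)$; (2) for each topological path $\pi_1$ from $x_1$ there is a topological path $\pi_2$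 from $x_2$ with $B(\pi_1(1),\pi_2(1))$ and such that for all $r_2\in[0,1)$ there is $r_1\in[0,1)$ with $B(\pi_1(r_1),\pi_2(r_2))$. *)

theory Defs
  imports "HOL-Analysis.Analysis"
begin

text \<open>A simplex is represented by its (finite, nonempty, affinely independent)
  vertex set; the simplex itself is the convex hull of the vertices.
  The ambient space R^m is an arbitrary Euclidean space type.\<close>

definition is_simplex :: "'a::euclidean_space set \<Rightarrow> bool" where
  "is_simplex S \<longleftrightarrow> finite S \<and> S \<noteq> {} \<and> \<not> affine_dependent S"

definition simplex_of :: "'a::euclidean_space set \<Rightarrow> 'a set" where
  "simplex_of S = convex hull S"

definition is_face :: "'a::euclidean_space set \<Rightarrow> 'a set \<Rightarrow> bool" where
  "is_face F S \<longleftrightarrow> F \<noteq> {} \<and> F \<subseteq> S"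

definition cell :: "'a::euclidean_space set \<Rightarrow> 'a set" where
  "cell S = {y. \<exists>l. (\<forall>v\<in>S. 0 < l v \<and> l v \<le> 1) \<and> sum l S = 1 \<and> y = (\<Sum>v\<in>S. l v *\<^sub>R v)}"

definition simplicial_complex :: "'a::euclidean_space set set \<Rightarrow> bool" where
  "simplicial_complex K \<longleftrightarrow>
     finite K \<and> (\<forall>S\<in>K. is_simplex S) \<and>
     (\<forall>S\<in>K. \<forall>F. is_face F S \<longrightarrow> F \<in> K) \<and>
     (\<forall>S\<in>K. \<forall>T\<in>K. simplex_of S \<inter> simplex_of T = {} \<or>
        (\<exists>F. is_face F S \<and> is_face F T \<and> simplex_of S \<inter> simplex_of T = simplex_of F))"

definition polyhedron :: "'a::euclidean_space set set \<Rightarrow> 'a set" where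
  "polyhedron K = (\<Union>S\<in>K. simplex_of S)"

definition polyhedral_model :: "'a::euclidean_space set set \<Rightarrow> ('p \<Rightarrow> 'a set) \<Rightarrow> bool" where
  "polyhedral_model K V \<longleftrightarrow> simplicial_complex K \<and>
     (\<forall>p. \<exists>C\<subseteq>K. V p = (\<Union>S\<in>C. cell S))"

definition topo_path :: "'a::euclidean_space set set \<Rightarrow> (real \<Rightarrow> 'a) \<Rightarrow> 'a \<Rightarrow> bool" where
  "topo_path K \<pi> x \<longleftrightarrow> path \<pi> \<and> path_image \<pi> \<subseteq> polyhedron K \<and> \<pi> 0 = x"

datatype 'p slcs = Atom 'p | Neg "'p slcs" | Conj "'p slcs" "'p slcs" | Eta "'p slcs" "'p slcs"

primrec sat :: "'a::euclidean_space set set \<Rightarrow> ('p \<Rightarrow> 'a set) \<Rightarrow> 'a \<Rightarrow> 'p slcs \<Rightarrow> bool" where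
  "sat K V x (Atom p) \<longleftrightarrow> x \<in> V p"
| "sat K V x (Neg f) \<longleftrightarrow> \<not> sat K V x f"
| "sat K V x (Conj f g) \<longleftrightarrow> sat K V x f \<and> sat K V x g"
| "sat K V x (Eta f g) \<longleftrightarrow> (\<exists>\<pi>. topo_path K \<pi> x \<and> sat K V (\<pi> 1) g \<and>
                                 (\<forall>r\<in>{0..<1}. sat K V (\<pi> r) f))"

definition eta_equiv :: "'a::euclidean_space set set \<Rightarrow> ('p \<Rightarrow> 'a set) \<Rightarrow> 'a \<Rightarrow> 'a \<Rightarrow> bool" where
  "eta_equiv K V x1 x2 \<longleftrightarrow> x1 \<in> polyhedron K \<and> x2 \<in> polyhedron K \<and>
     (\<forall>\<phi>. sat K V x1 \<phi> \<longleftrightarrow> sat K V x2 \<phi>)"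

definition weak_simplicial_bisim ::
    "'a::euclidean_space set set \<Rightarrow> ('p \<Rightarrow> 'a set) \<Rightarrow> ('a \<Rightarrow> 'a \<Rightarrow> bool) \<Rightarrow> bool" where
  "weak_simplicial_bisim K V B \<longleftrightarrow>
     (\<forall>x y. B x y \<longrightarrow> x \<in> polyhedron K \<and> y \<in> polyhedron K) \<and>
     (\<forall>x y. B x y \<longrightarrow> B y x) \<and>
     (\<forall>x1 x2. B x1 x2 \<longrightarrow>
        (\<forall>p. x1 \<in> V p \<longleftrightarrow> x2 \<in> V p) \<and>
        (\<forall>\<pi>1. topo_path K \<pi>1 x1 \<longrightarrow>
           (\<exists>\<pi>2. topo_path K \<pi>2 x2 \<and> B (\<pi>1 1) (\<pi>2 1) \<and>
              (\<forall>r2\<in>{0..<1}. \<exists>r1\<in>{0..<1}. B (\<pi>1 r1) (\<pi>2 r2)))))"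

end

theory Submission
  imports Defs
begin

text \<open>Points of the same cell satisfy the same formulas: atoms are unions of cells, and an
  \<open>\<eta>\<close>-path from a point of a cell can be preceded by the straight segment to it from any
  other point of that (convex) cell. As the finitely many cells cover \<open>|K|\<close>, there are only
  finitely many \<open>\<equiv>\<^sub>\<eta>\<close>-classes, and each is defined by a characteristic formula
  \<open>\<xi>\<close>: the conjunction of formulas separating it from the other classes. For a path
  \<open>\<pi>\<^sub>1\<close> from \<open>x\<^sub>1\<close>, the formula \<open>\<eta>(\<Or>\<xi>\<^sub>a, \<xi>\<^sub>c)\<close>, with \<open>a\<close>
  ranging over the classes met by \<open>\<pi>\<^sub>1\<close> on \<open>[0,1)\<close> and \<open>c\<close> the class of
  \<open>\<pi>\<^sub>1(1)\<close>, holds at \<open>x\<^sub>1\<close>, hence at \<open>x\<^sub>2\<close>; its witnessing path from \<open>x\<^sub>2\<close>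
  is the matching path.\<close>

lemma simplicial_complex_affine_independent:
  "simplicial_complex K \<Longrightarrow> S \<in> K \<Longrightarrow> \<not> affine_dependent S"
  by (simp add: simplicial_complex_def is_simplex_def)

lemma simplicial_complex_face:
  "simplicial_complex K \<Longrightarrow> S \<in> K \<Longrightarrow> F \<subseteq> S \<Longrightarrow> F \<noteq> {} \<Longrightarrow> F \<in> K"
  by (simp add: simplicial_complex_def is_face_def)

lemma simplicial_complex_Int:
  assumes "simplicial_complex K" "S \<in> K" "T \<in> K" "convex hull S \<inter> convex hull T \<noteq> {}"
  obtains F where "F \<subseteq> S" "F \<subseteq> T" "convex hull S \<inter> convex hull T = convex hull F"
  using assms unfolding simplicial_complex_def is_face_def simplex_of_def by metis

lemma polyhedral_model_simplicial_complex:
  "polyhedral_model K V \<Longrightarrow> simplicial_complex K"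
  by (simp add: polyhedral_model_def)

lemma cell_eq_rel_interior:
  assumes "\<not> affine_dependent S"
  shows "cell S = rel_interior (convex hull S)"
proof -
  have "l v \<le> 1" if "\<forall>w\<in>S. 0 < l w" "sum l S = 1" "v \<in> S" for l :: "'a \<Rightarrow> real" and v
    using that member_le_sum[of v S l] aff_independent_finite[OF assms] by fastforce
  then show ?thesis
    unfolding cell_def rel_interior_convex_hull_explicit[OF assms] by blast
qed

lemma mem_rel_interior_convex_hull_face:
  fixes S :: "'a::euclidean_space set"
  assumes "\<not> affine_dependent S" "x \<in> convex hull S"
  shows "\<exists>F\<subseteq>S. F \<noteq> {} \<and> x \<in> rel_interior (convex hull F)"
  using aff_independent_finite[OF assms(1)] assms
proof (induction S rule: finite_psubset_induct)
  case (psubset S)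
  show ?case
  proof (cases "x \<in> rel_interior (convex hull S)")
    case True
    then show ?thesis using psubset.prems(2) by auto
  next
    case False
    then obtain a where a: "a \<in> S" "x \<in> convex hull (S - {a})"
      using psubset.prems rel_boundary_of_convex_hull[OF psubset.prems(1)] by blast
    have "\<not> affine_dependent (S - {a})"
      using psubset.prems(1) affine_independent_subset by blast
    then obtain F where "F \<subseteq> S - {a}" "F \<noteq> {}" "x \<in> rel_interior (convex hull F)"
      using psubset.IH[of "S - {a}"] a by blast
    then show ?thesis by blast
  qed
qed

lemma polyhedron_eq_Union_cells:
  assumes K: "simplicial_complex K"
  shows "polyhedron K = (\<Union>F\<in>K. cell F)"
proof (intro equalityI subsetI)
  fix x assume "x \<in> polyhedron K"
  then obtain S where S: "S \<in> K" "x \<in> convex hull S"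
    unfolding polyhedron_def simplex_of_def by blast
  have ind: "\<not> affine_dependent S"
    using simplicial_complex_affine_independent[OF K S(1)] .
  obtain F where F: "F \<subseteq> S" "F \<noteq> {}" "x \<in> rel_interior (convex hull F)"
    using mem_rel_interior_convex_hull_face[OF ind S(2)] by blast
  have "x \<in> cell F"
    using F(3) cell_eq_rel_interior[OF affine_independent_subset[OF ind F(1)]] by simp
  moreover have "F \<in> K"
    using simplicial_complex_face[OF K S(1) F(1,2)] .
  ultimately show "x \<in> (\<Union>F\<in>K. cell F)" by blast
next
  fix x assume "x \<in> (\<Union>F\<in>K. cell F)"
  then obtain F where F: "F \<in> K" "x \<in> cell F" by blast
  then have "x \<in> convex hull F"
    using cell_eq_rel_interior[OF simplicial_complex_affine_independent[OF K F(1)]]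
      rel_interior_subset by blast
  then show "x \<in> polyhedron K"
    using F(1) unfolding polyhedron_def simplex_of_def by blast
qed

lemma cells_meet_imp_eq:
  assumes K: "simplicial_complex K" and "S \<in> K" "T \<in> K" "y \<in> cell S" "y \<in> cell T"
  shows "S = T"
proof -
  have indS: "\<not> affine_dependent S" and indT: "\<not> affine_dependent T"
    using simplicial_complex_affine_independent K assms(2,3) by blast+
  have yS: "y \<in> rel_interior (convex hull S)" and yT: "y \<in> rel_interior (convex hull T)"
    using assms(4,5) cell_eq_rel_interior[OF indS] cell_eq_rel_interior[OF indT] by auto
  then have "convex hull S \<inter> convex hull T \<noteq> {}"
    using rel_interior_subset by blast
  then obtain F where F: "F \<subseteq> S" "F \<subseteq> T" "convex hull S \<inter> convex hull T = convex hull F"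
    using simplicial_complex_Int[OF K assms(2,3)] by blast
  have y: "y \<in> convex hull F"
    using F(3) yS yT rel_interior_subset by blast
  have "convex hull F = convex hull S"
    using face_of_disjoint_rel_interior[of "convex hull F" "convex hull S"] y yS
      face_of_convex_hull_affine_independent[OF indS] F(1) by blast
  moreover have "convex hull F = convex hull T"
    using face_of_disjoint_rel_interior[of "convex hull F" "convex hull T"] y yT
      face_of_convex_hull_affine_independent[OF indT] F(2) by blast
  ultimately have "{x. x extreme_point_of convex hull S} = {x. x extreme_point_of convex hull T}"
    by simp
  then show "S = T"
    by (simp add: extreme_point_of_convex_hull_affine_independent[OF indS]
        extreme_point_of_convex_hull_affine_independent[OF indT])
qed

lemma topo_path_in_polyhedron:
  "topo_path K \<pi> x \<Longrightarrow> r \<in> {0..1} \<Longrightarrow> \<pi> r \<in> polyhedron K"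
  by (auto simp: topo_path_def path_image_def)

lemma sat_Eta_imp_first: "sat K V x (Eta \<phi> \<psi>) \<Longrightarrow> sat K V x \<phi>"
  by (force simp: topo_path_def)

lemma sat_Eta_prepend_segment:
  assumes seg: "closed_segment y x \<subseteq> polyhedron K" and "\<forall>z\<in>closed_segment y x. sat K V z \<phi>"
    and "sat K V x (Eta \<phi> \<psi>)"
  shows "sat K V y (Eta \<phi> \<psi>)"
proof -
  obtain \<pi> where \<pi>: "topo_path K \<pi> x" "sat K V (\<pi> 1) \<psi>" "\<forall>r\<in>{0..<1}. sat K V (\<pi> r) \<phi>"
    using assms(3) by auto
  define \<rho> where "\<rho> = linepath y x +++ \<pi>"
  have "topo_path K \<rho> y"
    unfolding topo_path_def \<rho>_def
  proof (intro conjI)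
    show "path (linepath y x +++ \<pi>)"
      using \<pi>(1) unfolding topo_path_def by (auto simp: pathstart_def)
    show "path_image (linepath y x +++ \<pi>) \<subseteq> polyhedron K"
      using path_image_join_subset[of "linepath y x" \<pi>] seg \<pi>(1) unfolding topo_path_def by auto
    show "(linepath y x +++ \<pi>) 0 = y"
      by (simp add: joinpaths_def linepath_def)
  qed
  moreover have "\<rho> 1 = \<pi> 1"
    by (simp add: \<rho>_def joinpaths_def)
  moreover have "sat K V (\<rho> r) \<phi>" if r: "r \<in> {0..<1}" for r
  proof (cases "r \<le> 1/2")
    case True
    then have "\<rho> r \<in> closed_segment y x"
      using r by (auto simp: \<rho>_def joinpaths_def intro: linepath_in_path)
    then show ?thesis using assms(2) by blast
  next
    case False
    then have "\<rho> r = \<pi> (2 * r - 1)" "2 * r - 1 \<in> {0..<1}"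
      using r by (auto simp: \<rho>_def joinpaths_def)
    then show ?thesis using \<pi>(3) by simp
  qed
  ultimately show ?thesis
    using \<pi>(2) by auto
qed

lemma sat_cell_invariant:
  assumes V: "polyhedral_model K V" and S: "S \<in> K"
  shows "x \<in> cell S \<Longrightarrow> y \<in> cell S \<Longrightarrow> sat K V x \<phi> \<longleftrightarrow> sat K V y \<phi>"
proof (induction \<phi> arbitrary: x y)
  case (Atom p)
  note K = polyhedral_model_simplicial_complex[OF V]
  obtain C where C: "C \<subseteq> K" "V p = (\<Union>T\<in>C. cell T)"
    using V unfolding polyhedral_model_def by blast
  have "z \<in> V p \<longleftrightarrow> S \<in> C" if z: "z \<in> cell S" for z
  proof
    assume "z \<in> V p"
    then obtain T where T: "T \<in> C" "z \<in> cell T"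
      using C(2) by blast
    then have "T = S"
      using cells_meet_imp_eq[OF K _ S T(2) z] C(1) by blast
    then show "S \<in> C"
      using T(1) by simp
  qed (use C(2) z in blast)
  then show ?case
    using Atom by simp
next
  case (Neg \<phi>)
  show ?case using Neg.IH[OF Neg.prems] by simp
next
  case (Conj \<phi> \<psi>)
  show ?case using Conj.IH(1)[OF Conj.prems] Conj.IH(2)[OF Conj.prems] by simp
next
  case (Eta \<phi> \<psi>)
  note K = polyhedral_model_simplicial_complex[OF V]
  have "cell S = rel_interior (convex hull S)"
    using cell_eq_rel_interior[OF simplicial_complex_affine_independent[OF K S]] .
  then have convex: "convex (cell S)"
    by (simp add: convex_rel_interior)
  have cell_poly: "cell S \<subseteq> polyhedron K"
    using polyhedron_eq_Union_cells[OF K] S by blast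
  have "sat K V y (Eta \<phi> \<psi>)"
    if xy: "x \<in> cell S" "y \<in> cell S" and x: "sat K V x (Eta \<phi> \<psi>)" for x y
  proof (rule sat_Eta_prepend_segment[OF _ _ x])
    have seg: "closed_segment y x \<subseteq> cell S"
      using closed_segment_subset[OF xy(2,1) convex] .
    then show "closed_segment y x \<subseteq> polyhedron K"
      using cell_poly by blast
    show "\<forall>z\<in>closed_segment y x. sat K V z \<phi>"
    proof
      fix z assume "z \<in> closed_segment y x"
      then have "z \<in> cell S" using seg by blast
      then show "sat K V z \<phi>"
        using Eta.IH(1)[OF xy(1)] sat_Eta_imp_first[OF x] by blast
    qed
  qed
  then show ?case
    using Eta.prems by blast
qed

lemma finite_sat_types:
  assumes V: "polyhedral_model K V"
  shows "finite ((\<lambda>z. {\<phi>. sat K V z \<phi>}) ` polyhedron K)"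
proof -
  note K = polyhedral_model_simplicial_complex[OF V]
  have "finite ((\<lambda>z. {\<phi>. sat K V z \<phi>}) ` cell F)" if F: "F \<in> K" for F
  proof (cases "cell F = {}")
    case False
    then obtain x where x: "x \<in> cell F" by blast
    have "{\<phi>. sat K V z \<phi>} = {\<phi>. sat K V x \<phi>}" if "z \<in> cell F" for z
      using sat_cell_invariant[OF V F that x] by blast
    then have "(\<lambda>z. {\<phi>. sat K V z \<phi>}) ` cell F \<subseteq> {{\<phi>. sat K V x \<phi>}}"
      by blast
    then show ?thesis
      using finite_subset by blast
  qed simp
  moreover have "finite K"
    using K by (simp add: simplicial_complex_def)
  ultimately show ?thesis
    unfolding polyhedron_eq_Union_cells[OF K] image_UN by blast
qed

lemma sat_Conj_finite:
  assumes "finite \<Phi>"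
  shows "\<exists>\<psi>. \<forall>x. sat K V x \<psi> \<longleftrightarrow> (\<forall>\<phi>\<in>\<Phi>. sat K V x \<phi>)"
  using assms
proof (induction \<Phi> rule: finite_induct)
  case empty
  have "sat K V x (Neg (Conj (Atom p) (Neg (Atom p))))" for x p
    by simp
  then show ?case
    by blast
next
  case (insert \<phi> \<Phi>)
  then obtain \<psi> where "\<forall>x. sat K V x \<psi> \<longleftrightarrow> (\<forall>\<phi>\<in>\<Phi>. sat K V x \<phi>)"
    by blast
  then have "\<forall>x. sat K V x (Conj \<phi> \<psi>) \<longleftrightarrow> (\<forall>\<phi>'\<in>insert \<phi> \<Phi>. sat K V x \<phi>')"
    by simp
  then show ?case ..
qed

lemma sat_Disj_finite:
  assumes "finite \<Phi>"
  shows "\<exists>\<psi>. \<forall>x. sat K V x \<psi> \<longleftrightarrow> (\<exists>\<phi>\<in>\<Phi>. sat K V x \<phi>)"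
proof -
  obtain \<psi> where \<psi>: "\<forall>x. sat K V x \<psi> \<longleftrightarrow> (\<forall>\<phi>\<in>Neg ` \<Phi>. sat K V x \<phi>)"
    using sat_Conj_finite[of "Neg ` \<Phi>"] assms by blast
  have "\<forall>x. sat K V x (Neg \<psi>) \<longleftrightarrow> (\<exists>\<phi>\<in>\<Phi>. sat K V x \<phi>)"
    using \<psi> by simp
  then show ?thesis ..
qed

lemma characteristic_formulas:
  assumes "finite ((\<lambda>z. {\<phi>. sat K V z \<phi>}) ` Q)"
  obtains \<xi> where "finite (\<xi> ` Q)"
    "\<And>x y. x \<in> Q \<Longrightarrow> y \<in> Q \<Longrightarrow> sat K V y (\<xi> x) \<longleftrightarrow> (\<forall>\<phi>. sat K V x \<phi> \<longleftrightarrow> sat K V y \<phi>)"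
proof -
  define type where "type z = {\<phi>. sat K V z \<phi>}" for z
  have fin: "finite (type ` Q)"
    using assms by (simp add: type_def)
  have "\<exists>\<phi>. \<phi> \<in> s \<and> \<phi> \<notin> t" if st: "s \<in> range type" "t \<in> range type" "s \<noteq> t" for s t
  proof -
    obtain x y where xy: "s = type x" "t = type y"
      using st(1,2) by blast
    then obtain \<phi> where "sat K V x \<phi> \<noteq> sat K V y \<phi>"
      using st(3) unfolding type_def by blast
    then have "sat K V x \<phi> \<and> \<not> sat K V y \<phi> \<or> sat K V x (Neg \<phi>) \<and> \<not> sat K V y (Neg \<phi>)"
      by auto
    then show ?thesis
      unfolding xy type_def by blast
  qed
  then obtain d where d: "\<And>s t. s \<in> range type \<Longrightarrow> t \<in> range type \<Longrightarrow> s \<noteq> t \<Longrightarrow> d s t \<in> s \<and> d s t \<notin> t"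
    by metis
  have "\<forall>s. \<exists>\<psi>. \<forall>y. sat K V y \<psi> \<longleftrightarrow> (\<forall>t\<in>type ` Q - {s}. sat K V y (d s t))"
  proof
    fix s
    show "\<exists>\<psi>. \<forall>y. sat K V y \<psi> \<longleftrightarrow> (\<forall>t\<in>type ` Q - {s}. sat K V y (d s t))"
      using sat_Conj_finite[OF finite_imageI[OF finite_Diff[OF fin], of "d s"]] by simp
  qed
  from choice[OF this] obtain c
    where c: "\<And>s y. sat K V y (c s) \<longleftrightarrow> (\<forall>t\<in>type ` Q - {s}. sat K V y (d s t))"
    by blast
  show ?thesis
  proof
    show "finite ((c \<circ> type) ` Q)"
      using finite_imageI[OF fin, of c] by (simp add: image_image)
    fix x y assume "x \<in> Q" "y \<in> Q"
    have "sat K V y (c (type x)) \<longleftrightarrow> type x = type y"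
    proof
      assume y_sat: "sat K V y (c (type x))"
      show "type x = type y"
      proof (rule ccontr)
        assume ne: "type x \<noteq> type y"
        then have "sat K V y (d (type x) (type y))"
          using y_sat c \<open>y \<in> Q\<close> by blast
        moreover have "d (type x) (type y) \<notin> type y"
          using d[OF _ _ ne] by blast
        ultimately show False
          by (simp add: type_def)
      qed
    next
      assume eq: "type x = type y"
      have "d (type x) t \<in> type y" if "t \<in> type ` Q - {type x}" for t
        using d[of "type x" t] that eq by blast
      then show "sat K V y (c (type x))"
        using c by (simp add: type_def)
    qed
    then show "sat K V y ((c \<circ> type) x) \<longleftrightarrow> (\<forall>\<phi>. sat K V x \<phi> \<longleftrightarrow> sat K V y \<phi>)"
      by (simp add: type_def set_eq_iff)
  qed
qed

lemma eta_equiv_characteristic_formulas: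
  assumes "polyhedral_model K V"
  obtains \<xi> where "finite (\<xi> ` polyhedron K)"
    "\<And>x y. x \<in> polyhedron K \<Longrightarrow> y \<in> polyhedron K \<Longrightarrow> sat K V y (\<xi> x) \<longleftrightarrow> eta_equiv K V x y"
proof -
  obtain \<xi> where fin: "finite (\<xi> ` polyhedron K)" and \<xi>: "\<And>x y. x \<in> polyhedron K \<Longrightarrow>
      y \<in> polyhedron K \<Longrightarrow> sat K V y (\<xi> x) \<longleftrightarrow> (\<forall>\<phi>. sat K V x \<phi> \<longleftrightarrow> sat K V y \<phi>)"
    using characteristic_formulas[OF finite_sat_types[OF assms]] by blast
  show thesis
  proof (rule that[OF fin])
    fix x y assume "x \<in> polyhedron K" "y \<in> polyhedron K"
    then show "sat K V y (\<xi> x) \<longleftrightarrow> eta_equiv K V x y"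
      using \<xi> by (simp add: eta_equiv_def)
  qed
qed

lemma eta_equiv_path_transfer:
  assumes V: "polyhedral_model K V" and x12: "eta_equiv K V x1 x2" and \<pi>1: "topo_path K \<pi>1 x1"
  shows "\<exists>\<pi>2. topo_path K \<pi>2 x2 \<and> eta_equiv K V (\<pi>1 1) (\<pi>2 1) \<and>
           (\<forall>r2\<in>{0..<1}. \<exists>r1\<in>{0..<1}. eta_equiv K V (\<pi>1 r1) (\<pi>2 r2))"
proof -
  obtain \<xi> where fin: "finite (\<xi> ` polyhedron K)"
    and \<xi>: "\<And>x y. x \<in> polyhedron K \<Longrightarrow> y \<in> polyhedron K \<Longrightarrow> sat K V y (\<xi> x) \<longleftrightarrow> eta_equiv K V x y"
    using eta_equiv_characteristic_formulas[OF V] by blast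
  have \<pi>1_poly: "\<pi>1 r \<in> polyhedron K" if "r \<in> {0..1}" for r
    using topo_path_in_polyhedron[OF \<pi>1 that] .
  have "(\<lambda>r. \<xi> (\<pi>1 r)) ` {0..<1} \<subseteq> \<xi> ` polyhedron K"
    using \<pi>1_poly by auto
  then have "finite ((\<lambda>r. \<xi> (\<pi>1 r)) ` {0..<1})"
    using finite_subset fin by blast
  then obtain \<delta> where "\<forall>y. sat K V y \<delta> \<longleftrightarrow> (\<exists>\<phi>\<in>(\<lambda>r. \<xi> (\<pi>1 r)) ` {0..<1}. sat K V y \<phi>)"
    using sat_Disj_finite by blast
  then have \<delta>: "\<And>y. sat K V y \<delta> \<longleftrightarrow> (\<exists>r\<in>{0..<1}. sat K V y (\<xi> (\<pi>1 r)))"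
    by simp
  have refl: "sat K V x (\<xi> x)" if "x \<in> polyhedron K" for x
    using \<xi>[OF that that] that by (simp add: eta_equiv_def)
  have "sat K V x1 (Eta \<delta> (\<xi> (\<pi>1 1)))"
    unfolding sat.simps
  proof (intro exI conjI ballI)
    show "topo_path K \<pi>1 x1"
      by (rule \<pi>1)
    show "sat K V (\<pi>1 1) (\<xi> (\<pi>1 1))"
      using refl \<pi>1_poly by simp
    fix r :: real assume "r \<in> {0..<1}"
    then show "sat K V (\<pi>1 r) \<delta>"
      using \<delta>[of "\<pi>1 r"] refl[OF \<pi>1_poly[of r]] by auto
  qed
  then have "sat K V x2 (Eta \<delta> (\<xi> (\<pi>1 1)))"
    using x12 unfolding eta_equiv_def by blast
  then obtain \<pi>2 where \<pi>2: "topo_path K \<pi>2 x2" "sat K V (\<pi>2 1) (\<xi> (\<pi>1 1))"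
    "\<And>r2. r2 \<in> {0..<1} \<Longrightarrow> sat K V (\<pi>2 r2) \<delta>"
    by auto
  have \<pi>2_poly: "\<pi>2 r \<in> polyhedron K" if "r \<in> {0..1}" for r
    using topo_path_in_polyhedron[OF \<pi>2(1) that] .
  have "eta_equiv K V (\<pi>1 1) (\<pi>2 1)"
    using \<xi> \<pi>2(2) \<pi>1_poly \<pi>2_poly by simp
  moreover have "\<exists>r1\<in>{0..<1}. eta_equiv K V (\<pi>1 r1) (\<pi>2 r2)" if "r2 \<in> {0..<1}" for r2
    using \<pi>2(3)[OF that] \<delta> \<xi> \<pi>1_poly \<pi>2_poly that by auto
  ultimately show ?thesis
    using \<pi>2(1) by blast
qed

theorem lemma11:
  fixes K :: "'a::euclidean_space set set" and V :: "'p \<Rightarrow> 'a set"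
  assumes "polyhedral_model K V"
  shows "weak_simplicial_bisim K V (eta_equiv K V)"
proof -
  have "x1 \<in> V p \<longleftrightarrow> x2 \<in> V p" if "eta_equiv K V x1 x2" for x1 x2 p
    using that unfolding eta_equiv_def by (metis sat.simps(1))
  then show ?thesis
    unfolding weak_simplicial_bisim_def
    using eta_equiv_path_transfer[OF assms] by (auto simp: eta_equiv_def)
qed

end
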